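(* Let $(q_n),(r_n)$ be complex sequences vanishing faster than any negative power of $|n|$ as $n\to\pm\infty$ with $1-q_nr_n\neq0$ and $1+q_nr_{n+1}\ne0$ for all $n$, and let $D_\infty,E_\infty,u_n,v_n,p_n,s_n$ be as in the context. Writing $[\mathbf K]_1,[\mathbf K]_2$ for the first and second components of a column vector $\mathbf K$, we have $$q_n=\frac{D_\infty}{E_\infty}\left(\frac{[\psi_n^{(u,v)}(1)]_1}{[\bar\psi_n^{(u,v)}(1)]_1}-\frac{[\psi_{n+1}^{(u,v)}(1)]_1}{[\bar\psi_{n+1}^{(u,v)}(1)]_1}\right),$$ $$r_n=-\frac{E_\infty}{D_\infty}\,\frac{[\bar\psi_n^{(u,v)}(1)]_1[\bar\psi_n^{(u,v)}(1)]_2}{[\bar\psi_n^{(u,v)}(1)]_1[\psi_n^{(u,v)}(1)]_2-[\bar\psi_n^{(u,v)}(1)]_2[\psi_n^{(u,v)}(1)]_1},$$ $$q_n=\frac{D_\infty}{E_\infty}\,\frac{[\psi_n^{(p,s)}(1)]_1[\psi_n^{(p,s)}(1)]_2}{[\bar\psi_n^{(p,s)}(1)]_1[\psi_n^{(p,s)}(1)]_2-[\bar\psi_n^{(p,s)}(1)]_2[\psi_n^{(p,s)}(1)]_1},$$ $$r_n=\frac{E_\infty}{D_\infty}\left(\frac{[\bar\psi_{n-1}^{(p,s)}(1)]_2}{[\psi_{n-1}^{(p,s)}(1)]_2}-\frac{[\bar\psi_{n}^{(p,s)}(1)]_2}{[\psi_{n}^{(p,s)}(1)]_2}\right).$$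
   Context: System (U) with potentials $(a,b)$: $\begin{bmatrix}\xi_n\\ \eta_n\end{bmatrix}=\begin{bmatrix} z & z a_n\\ z^{-1}b_n & z^{-1}\end{bmatrix}\begin{bmatrix}\xi_{n+1}\\ \eta_{n+1}\end{bmatrix}$. $D_n=\prod_{j\le n}(1-q_jr_j)$, $E_n=\prod_{j\le n}(1+q_jr_{j+1})$, $D_\infty=\prod_{j\in\mathbb Z}(1-q_jr_j)$, $E_\infty=\prod_{j\in\mathbb Z}(1+q_jr_{j+1})$; $u_n=q_nE_{n-1}/D_n$, $v_n=(-r_n+r_{n+1}-q_nr_nr_{n+1})D_{n-1}/E_n$, $p_n=(q_n-q_{n+1}-q_nq_{n+1}r_{n+1})E_{n-1}/D_{n+1}$, $s_n=r_{n+1}D_n/E_n$. For system (U) with potentials $(u,v)$ (resp. $(p,s)$) and $|z|=1$, $\psi_n^{(u,v)}$, $\bar\psi_n^{(u,v)}$ (resp. $\psi_n^{(p,s)}$, $\bar\psi_n^{(p,s)}$) denote the Jost solutions, i.e. the unique solutions with $\psi_n=\begin{bmatrix}o(1)\\ z^n[1+o(1)]\end{bmatrix}$ and $\bar\psi_n=\begin{bmatrix}z^{-n}[1+o(1)]\\ o(1)\end{bmatrix}$ as $n\to+\infty$ (overbar not complex conjugation); they are evaluated at $z=1$. *)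

theory Defs
  imports "HOL-Analysis.Analysis"
begin

text \<open>Sequences indexed by the integers; a pair (x, y) stands for the column vector [x; y].\<close>

definition rapid_decay :: "(int \<Rightarrow> complex) \<Rightarrow> bool" where
  "rapid_decay q \<longleftrightarrow> (\<forall>k::nat.
      ((\<lambda>n. (of_int n) ^ k * q n) \<longlongrightarrow> 0) at_top \<and>
      ((\<lambda>n. (of_int n) ^ k * q n) \<longlongrightarrow> 0) at_bot)"

definition Dn :: "(int \<Rightarrow> complex) \<Rightarrow> (int \<Rightarrow> complex) \<Rightarrow> int \<Rightarrow> complex" where
  "Dn q r n = lim (\<lambda>m::nat. \<Prod>j\<in>{n - int m..n}. 1 - q j * r j)"

definition En :: "(int \<Rightarrow> complex) \<Rightarrow> (int \<Rightarrow> complex) \<Rightarrow> int \<Rightarrow> complex" where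
  "En q r n = lim (\<lambda>m::nat. \<Prod>j\<in>{n - int m..n}. 1 + q j * r (j + 1))"

definition Dinf :: "(int \<Rightarrow> complex) \<Rightarrow> (int \<Rightarrow> complex) \<Rightarrow> complex" where
  "Dinf q r = lim (\<lambda>m::nat. \<Prod>j\<in>{- int m..int m}. 1 - q j * r j)"

definition Einf :: "(int \<Rightarrow> complex) \<Rightarrow> (int \<Rightarrow> complex) \<Rightarrow> complex" where
  "Einf q r = lim (\<lambda>m::nat. \<Prod>j\<in>{- int m..int m}. 1 + q j * r (j + 1))"

definition u_pot :: "(int \<Rightarrow> complex) \<Rightarrow> (int \<Rightarrow> complex) \<Rightarrow> int \<Rightarrow> complex" where
  "u_pot q r n = q n * En q r (n - 1) / Dn q r n"

definition v_pot :: "(int \<Rightarrow> complex) \<Rightarrow> (int \<Rightarrow> complex) \<Rightarrow> int \<Rightarrow> complex" where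
  "v_pot q r n = (- r n + r (n + 1) - q n * r n * r (n + 1)) * Dn q r (n - 1) / En q r n"

definition p_pot :: "(int \<Rightarrow> complex) \<Rightarrow> (int \<Rightarrow> complex) \<Rightarrow> int \<Rightarrow> complex" where
  "p_pot q r n = (q n - q (n + 1) - q n * q (n + 1) * r (n + 1)) * En q r (n - 1) / Dn q r (n + 1)"

definition s_pot :: "(int \<Rightarrow> complex) \<Rightarrow> (int \<Rightarrow> complex) \<Rightarrow> int \<Rightarrow> complex" where
  "s_pot q r n = r (n + 1) * Dn q r n / En q r n"

definition solves_U :: "(int \<Rightarrow> complex) \<Rightarrow> (int \<Rightarrow> complex) \<Rightarrow> complex \<Rightarrow> (int \<Rightarrow> complex \<times> complex) \<Rightarrow> bool" where
  "solves_U a b z \<Psi> \<longleftrightarrow> (\<forall>n.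
      fst (\<Psi> n) = z * fst (\<Psi> (n + 1)) + z * a n * snd (\<Psi> (n + 1)) \<and>
      snd (\<Psi> n) = inverse z * b n * fst (\<Psi> (n + 1)) + inverse z * snd (\<Psi> (n + 1)))"

definition jost_psi :: "(int \<Rightarrow> complex) \<Rightarrow> (int \<Rightarrow> complex) \<Rightarrow> complex \<Rightarrow> (int \<Rightarrow> complex \<times> complex) \<Rightarrow> bool" where
  "jost_psi a b z \<Psi> \<longleftrightarrow> solves_U a b z \<Psi> \<and>
      ((\<lambda>n. fst (\<Psi> n)) \<longlongrightarrow> 0) at_top \<and>
      ((\<lambda>n. snd (\<Psi> n) / z powi n) \<longlongrightarrow> 1) at_top"

definition jost_psibar :: "(int \<Rightarrow> complex) \<Rightarrow> (int \<Rightarrow> complex) \<Rightarrow> complex \<Rightarrow> (int \<Rightarrow> complex \<times> complex) \<Rightarrow> bool" where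
  "jost_psibar a b z \<Psi> \<longleftrightarrow> solves_U a b z \<Psi> \<and>
      ((\<lambda>n. fst (\<Psi> n) * z powi n) \<longlongrightarrow> 1) at_top \<and>
      ((\<lambda>n. snd (\<Psi> n)) \<longlongrightarrow> 0) at_top"

end

theory Submission
  imports Defs
begin

text \<open>
  At \<open>z = 1\<close> the system (U) with potentials \<open>(u, v)\<close> is gauge equivalent, via the
  lower triangular matrices with rows \<open>(1/E\<^sub>n\<^sub>-\<^sub>1, 0)\<close> and \<open>(r\<^sub>n/E\<^sub>n\<^sub>-\<^sub>1, 1/D\<^sub>n\<^sub>-\<^sub>1)\<close>,
  to the system with potentials \<open>(q, 0)\<close>; likewise the system with potentials \<open>(p, s)\<close> is gauge
  equivalent, via the upper triangular matrices with rows \<open>(1/E\<^sub>n\<^sub>-\<^sub>1, -q\<^sub>n/D\<^sub>n)\<close> and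
  \<open>(0, 1/D\<^sub>n)\<close>, to the system with potentials \<open>(0, r\<^sub>n\<^sub>+\<^sub>1)\<close>. In each of these two systems one
  component of every solution is constant, and the other one has increments \<open>q\<^sub>n\<close> resp.
  \<open>r\<^sub>n\<^sub>+\<^sub>1\<close> times that constant. Since \<open>D\<^sub>n \<rightarrow> D\<^sub>\<infinity>\<close> and \<open>E\<^sub>n \<rightarrow> E\<^sub>\<infinity>\<close>, the Jost asymptotics
  determine the gauge-transformed Jost solutions completely, and the four formulas are read off
  from them; in the Wronskians the gauge contributes its determinant \<open>1/(E\<^sub>n\<^sub>-\<^sub>1 D\<^sub>n\<^sub>-\<^sub>1)\<close>
  resp. \<open>1/(E\<^sub>n\<^sub>-\<^sub>1 D\<^sub>n)\<close>.
\<close>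

section \<open>Rapidly decaying sequences\<close>

lemma filterlim_int_add_const_at_top: "filterlim (\<lambda>n::int. n + c) at_top at_top"
  unfolding filterlim_at_top eventually_at_top_linorder
proof
  fix Z show "\<exists>N. \<forall>n\<ge>N. Z \<le> n + c" by (rule exI[of _ "Z - c"]) auto
qed

lemma filterlim_int_add_const_at_bot: "filterlim (\<lambda>n::int. n + c) at_bot at_bot"
  unfolding filterlim_at_bot eventually_at_bot_linorder
proof
  fix Z show "\<exists>N. \<forall>n\<le>N. n + c \<le> Z" by (rule exI[of _ "Z - c"]) auto
qed

lemma rapid_decayD:
  assumes "rapid_decay x"
  shows "((\<lambda>n. of_int n ^ k * x n) \<longlongrightarrow> 0) at_top" "((\<lambda>n. of_int n ^ k * x n) \<longlongrightarrow> 0) at_bot"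
  using assms unfolding rapid_decay_def by blast+

lemma rapid_decay_tendsto_zero:
  assumes "rapid_decay x"
  shows "(x \<longlongrightarrow> 0) at_top" "(x \<longlongrightarrow> 0) at_bot"
  using rapid_decayD[OF assms, of 0] by simp_all

lemma rapid_decay_reflect:
  assumes "rapid_decay x"
  shows "rapid_decay (\<lambda>n. x (- n))"
  unfolding rapid_decay_def
proof (intro allI conjI)
  fix k
  have sign: "of_int n ^ k * x (- n) = (- 1) ^ k * (of_int (- n) ^ k * x (- n))" for n :: int
    by (simp add: power_minus' mult.assoc)
  have "((\<lambda>n. of_int (- n) ^ k * x (- n)) \<longlongrightarrow> 0) at_top"
    using rapid_decayD(2)[OF assms, of k, unfolded at_bot_mirror filterlim_filtermap] .
  then show "((\<lambda>n. of_int n ^ k * x (- n)) \<longlongrightarrow> 0) at_top"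
    unfolding sign by (rule tendsto_mult_right_zero)
  have "((\<lambda>n. of_int (- n) ^ k * x (- n)) \<longlongrightarrow> 0) at_bot"
    using rapid_decayD(1)[OF assms, of k, unfolded at_top_mirror filterlim_filtermap] .
  then show "((\<lambda>n. of_int n ^ k * x (- n)) \<longlongrightarrow> 0) at_bot"
    unfolding sign by (rule tendsto_mult_right_zero)
qed

lemma rapid_decay_mult_null:
  assumes "rapid_decay x" "(y \<longlongrightarrow> 0) at_top" "(y \<longlongrightarrow> 0) at_bot"
  shows "rapid_decay (\<lambda>n. x n * y n)"
  unfolding rapid_decay_def mult.assoc[symmetric]
  using rapid_decayD[OF assms(1)] assms(2,3) by (auto intro: tendsto_mult_zero)

lemma summable_norm_if_sq_decay:
  fixes x :: "nat \<Rightarrow> 'a::real_normed_div_algebra"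
  assumes "(\<lambda>k. of_nat k ^ 2 * x k) \<longlonglongrightarrow> 0"
  shows "summable (\<lambda>k. norm (x k))"
proof (rule summable_comparison_test_ev)
  have "eventually (\<lambda>k. norm (of_nat k ^ 2 * x k) < 1) sequentially"
    using tendstoD[OF assms zero_less_one] by simp
  then show "eventually (\<lambda>k. norm (norm (x k)) \<le> inverse (real k ^ 2)) sequentially"
    using eventually_gt_at_top[of 0]
  proof eventually_elim
    case (elim k)
    then have "real k ^ 2 * norm (x k) < 1" by (simp add: norm_mult norm_power)
    with elim(2) show ?case by (simp add: field_simps)
  qed
  show "summable (\<lambda>k. inverse (real k ^ 2))" by (rule inverse_power_summable) simp
qed

lemma rapid_decay_summable_right:
  assumes "rapid_decay x"
  shows "summable (\<lambda>k. norm (x (c + int k)))"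
proof (rule summable_norm_if_sq_decay)
  have to_top: "filterlim (\<lambda>k. c + int k) at_top sequentially"
    using filterlim_compose[OF filterlim_int_add_const_at_top filterlim_int_sequentially, of c]
    by (simp add: add.commute)
  have decay: "((\<lambda>k. of_int (c + int k) ^ j * x (c + int k)) \<longlongrightarrow> 0) sequentially" for j
    using filterlim_compose[OF rapid_decayD(1)[OF assms] to_top] .
  have expand: "of_nat k ^ 2 * x (c + int k) = of_int (c + int k) ^ 2 * x (c + int k)
      - 2 * of_int c * (of_int (c + int k) ^ 1 * x (c + int k))
      + of_int c ^ 2 * (of_int (c + int k) ^ 0 * x (c + int k))" for k
    by (simp add: power2_eq_square algebra_simps)
  show "(\<lambda>k. of_nat k ^ 2 * x (c + int k)) \<longlonglongrightarrow> 0"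
    unfolding expand
    using tendsto_add[OF tendsto_diff[OF decay[of 2] tendsto_mult_right_zero[OF decay[of 1]]]
        tendsto_mult_right_zero[OF decay[of 0]]]
    by (simp only: diff_zero add_0_right)
qed

lemma rapid_decay_summable_left:
  assumes "rapid_decay x"
  shows "summable (\<lambda>k. norm (x (c - int k)))"
  using rapid_decay_summable_right[OF rapid_decay_reflect[OF assms], of "- c"] by simp

section \<open>Infinite products over the integers\<close>

lemma tendsto_at_top_if_nat_restriction:
  fixes f :: "int \<Rightarrow> 'a::topological_space"
  assumes "(\<lambda>N. f (int N)) \<longlonglongrightarrow> L"
  shows "(f \<longlongrightarrow> L) at_top"
proof -
  have "eventually (\<lambda>n. f (int (nat n)) = f n) at_top"
    using eventually_ge_at_top[of 0] by (rule eventually_mono) simp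
  then show ?thesis
    using filterlim_compose[OF assms filterlim_nat_sequentially] by (simp only: tendsto_cong)
qed

definition left_prod :: "(int \<Rightarrow> 'a::{comm_monoid_mult, t2_space}) \<Rightarrow> int \<Rightarrow> 'a" where
  "left_prod g n = lim (\<lambda>m::nat. \<Prod>j\<in>{n - int m..n}. g j)"

definition sym_prod :: "(int \<Rightarrow> 'a::{comm_monoid_mult, t2_space}) \<Rightarrow> 'a" where
  "sym_prod g = lim (\<lambda>m::nat. \<Prod>j\<in>{- int m..int m}. g j)"

lemma prod_int_interval_reindex_left: "(\<Prod>j\<in>{n - int m..n}. g j) = (\<Prod>i\<le>m. g (n - int i))"
  by (rule prod.reindex_bij_witness[of _ "\<lambda>i. n - int i" "\<lambda>j. nat (n - j)"]) auto

lemma prod_int_interval_reindex_right: "(\<Prod>j\<in>{1..int m}. g j) = (\<Prod>i<m. g (1 + int i))"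
  by (rule prod.reindex_bij_witness[of _ "\<lambda>i. 1 + int i" "\<lambda>j. nat (j - 1)"]) auto

locale decaying_factors =
  fixes g :: "int \<Rightarrow> complex"
  assumes rapid_decay_factors: "rapid_decay (\<lambda>j. g j - 1)"
    and factors_nonzero: "g j \<noteq> 0"
begin

lemma convergent_prod_left: "convergent_prod (\<lambda>k. g (n - int k))"
  using rapid_decay_summable_left[OF rapid_decay_factors, of n]
  by (intro abs_convergent_prod_imp_convergent_prod summable_imp_abs_convergent_prod)

lemma convergent_prod_right: "convergent_prod (\<lambda>k. g (n + int k))"
  using rapid_decay_summable_right[OF rapid_decay_factors, of n]
  by (intro abs_convergent_prod_imp_convergent_prod summable_imp_abs_convergent_prod)

lemma left_partial_prods_tendsto: "(\<lambda>m. \<Prod>j\<in>{n - int m..n}. g j) \<longlonglongrightarrow> left_prod g n"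
proof -
  have "(\<lambda>m. \<Prod>j\<in>{n - int m..n}. g j) \<longlonglongrightarrow> prodinf (\<lambda>k. g (n - int k))"
    unfolding prod_int_interval_reindex_left by (rule convergent_prod_LIMSEQ[OF convergent_prod_left])
  then show ?thesis
    unfolding left_prod_def by (metis limI)
qed

lemma left_prod_eq_prodinf: "left_prod g n = prodinf (\<lambda>k. g (n - int k))"
  using convergent_prod_LIMSEQ[OF convergent_prod_left] left_partial_prods_tendsto
  unfolding prod_int_interval_reindex_left by (rule LIMSEQ_unique[symmetric])

lemma left_prod_nonzero: "left_prod g n \<noteq> 0"
  unfolding left_prod_eq_prodinf using convergent_prod_left factors_nonzero by (rule prodinf_nonzero)

lemma left_prod_rec: "left_prod g n = left_prod g (n - 1) * g n"
proof -
  have "prodinf (\<lambda>k. g (n - int (Suc k))) = prodinf (\<lambda>k. g (n - int k)) / g n"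
    using prodinf_split_head[OF convergent_prod_left] factors_nonzero by simp
  then show ?thesis
    unfolding left_prod_eq_prodinf using factors_nonzero by (simp add: algebra_simps)
qed

lemma left_prod_tendsto_sym_prod: "(left_prod g \<longlongrightarrow> sym_prod g) at_top"
  and sym_prod_nonzero: "sym_prod g \<noteq> 0"
proof -
  define R where "R = prodinf (\<lambda>k. g (1 + int k))"
  have right_prods: "(\<lambda>m. \<Prod>i<m. g (1 + int i)) \<longlonglongrightarrow> R"
    unfolding R_def using convergent_prod_LIMSEQ[OF convergent_prod_right]
    by (simp add: LIMSEQ_lessThan_iff_atMost add.commute)
  have "{- int m..int m} = {0 - int m..0} \<union> {1..int m}" for m by auto
  then have "(\<Prod>j\<in>{- int m..int m}. g j) = (\<Prod>j\<in>{0 - int m..0}. g j) * (\<Prod>i<m. g (1 + int i))" for m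
    by (simp add: prod.union_disjoint flip: prod_int_interval_reindex_right)
  then have "(\<lambda>m. \<Prod>j\<in>{- int m..int m}. g j) \<longlonglongrightarrow> left_prod g 0 * R"
    using left_partial_prods_tendsto[of 0] right_prods by (simp add: tendsto_mult)
  then have sym: "sym_prod g = left_prod g 0 * R"
    unfolding sym_prod_def by (rule limI)
  have "left_prod g (int N) = left_prod g 0 * (\<Prod>i<N. g (1 + int i))" for N
  proof (induction N)
    case (Suc N)
    have "left_prod g (int (Suc N)) = left_prod g (int N) * g (1 + int N)"
      using left_prod_rec[of "int (Suc N)"] by simp
    with Suc show ?case by simp
  qed simp
  then have "(\<lambda>N. left_prod g (int N)) \<longlonglongrightarrow> sym_prod g"
    unfolding sym using right_prods by (simp add: tendsto_mult)
  then show "(left_prod g \<longlongrightarrow> sym_prod g) at_top"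
    by (rule tendsto_at_top_if_nat_restriction)
  have "R \<noteq> 0"
    unfolding R_def using convergent_prod_right factors_nonzero by (rule prodinf_nonzero)
  then show "sym_prod g \<noteq> 0"
    unfolding sym using left_prod_nonzero by simp
qed

end

lemma solves_U_at_1:
  "solves_U a b 1 \<Psi> \<longleftrightarrow> (\<forall>n. fst (\<Psi> n) = fst (\<Psi> (n + 1)) + a n * snd (\<Psi> (n + 1)) \<and>
                                snd (\<Psi> n) = b n * fst (\<Psi> (n + 1)) + snd (\<Psi> (n + 1)))"
  by (simp add: solves_U_def)

lemma solves_U_at_1D:
  assumes "solves_U a b 1 \<Psi>"
  shows "fst (\<Psi> n) = fst (\<Psi> (n + 1)) + a n * snd (\<Psi> (n + 1))"
    and "snd (\<Psi> n) = b n * fst (\<Psi> (n + 1)) + snd (\<Psi> (n + 1))"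
  using assms unfolding solves_U_at_1 by blast+

lemma jost_psi_at_1:
  "jost_psi a b 1 \<Psi> \<longleftrightarrow> solves_U a b 1 \<Psi> \<and>
     ((\<lambda>n. fst (\<Psi> n)) \<longlongrightarrow> 0) at_top \<and> ((\<lambda>n. snd (\<Psi> n)) \<longlongrightarrow> 1) at_top"
  by (simp add: jost_psi_def)

lemma jost_psibar_at_1:
  "jost_psibar a b 1 \<Psi> \<longleftrightarrow> solves_U a b 1 \<Psi> \<and>
     ((\<lambda>n. fst (\<Psi> n)) \<longlongrightarrow> 1) at_top \<and> ((\<lambda>n. snd (\<Psi> n)) \<longlongrightarrow> 0) at_top"
  by (simp add: jost_psibar_def)

lemma shift_invariant_eq_limit:
  fixes y :: "int \<Rightarrow> 'a::t2_space"
  assumes "\<And>n. y n = y (n + 1)" and "(y \<longlongrightarrow> c) at_top"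
  shows "y n = c"
proof -
  have const: "y m = y n" if "n \<le> m" for m
    using that by (induction m rule: int_ge_induct) (simp_all flip: assms(1))
  have "eventually (\<lambda>m. y m = y n) at_top"
    using eventually_ge_at_top[of n] by (rule eventually_mono) (rule const)
  then have "(y \<longlongrightarrow> y n) at_top"
    by (rule tendsto_eventually)
  then show ?thesis
    using assms(2) by (rule tendsto_unique[OF trivial_limit_at_top_linorder])
qed

lemma solves_U_at_1_snd_eq_limit:
  assumes "solves_U a (\<lambda>_. 0) 1 \<Phi>" and "((\<lambda>n. snd (\<Phi> n)) \<longlongrightarrow> c) at_top"
  shows "snd (\<Phi> n) = c"
proof (rule shift_invariant_eq_limit[where y = "\<lambda>n. snd (\<Phi> n)"])
  show "snd (\<Phi> m) = snd (\<Phi> (m + 1))" for m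
    using solves_U_at_1D(2)[OF assms(1)] by simp
qed (rule assms(2))

lemma solves_U_at_1_fst_eq_limit:
  assumes "solves_U (\<lambda>_. 0) b 1 \<Phi>" and "((\<lambda>n. fst (\<Phi> n)) \<longlongrightarrow> c) at_top"
  shows "fst (\<Phi> n) = c"
proof (rule shift_invariant_eq_limit[where y = "\<lambda>n. fst (\<Phi> n)"])
  show "fst (\<Phi> m) = fst (\<Phi> (m + 1))" for m
    using solves_U_at_1D(1)[OF assms(1)] by simp
qed (rule assms(2))

section \<open>The potentials \<open>(u, v)\<close> and \<open>(p, s)\<close> and their gauge transformations\<close>

lemma Dn_eq_left_prod: "Dn q r = left_prod (\<lambda>j. 1 - q j * r j)"
  by (simp add: fun_eq_iff Dn_def left_prod_def)

lemma En_eq_left_prod: "En q r = left_prod (\<lambda>j. 1 + q j * r (j + 1))"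
  by (simp add: fun_eq_iff En_def left_prod_def)

lemma Dinf_eq_sym_prod: "Dinf q r = sym_prod (\<lambda>j. 1 - q j * r j)"
  by (simp add: Dinf_def sym_prod_def)

lemma Einf_eq_sym_prod: "Einf q r = sym_prod (\<lambda>j. 1 + q j * r (j + 1))"
  by (simp add: Einf_def sym_prod_def)

locale rapidly_decaying_potentials =
  fixes q r :: "int \<Rightarrow> complex"
  assumes rapid_decay_q: "rapid_decay q" and rapid_decay_r: "rapid_decay r"
    and D_factor_nonzero: "1 - q n * r n \<noteq> 0"
    and E_factor_nonzero: "1 + q n * r (n + 1) \<noteq> 0"
begin

lemma r_tendsto_zero: "(r \<longlongrightarrow> 0) at_top" "(r \<longlongrightarrow> 0) at_bot"
  using rapid_decay_tendsto_zero[OF rapid_decay_r] .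

sublocale D_factors: decaying_factors "\<lambda>j. 1 - q j * r j"
proof
  have "((\<lambda>j. - r j) \<longlongrightarrow> 0) at_top" "((\<lambda>j. - r j) \<longlongrightarrow> 0) at_bot"
    using tendsto_minus[OF r_tendsto_zero(1)] tendsto_minus[OF r_tendsto_zero(2)] by simp_all
  with rapid_decay_q have "rapid_decay (\<lambda>j. q j * - r j)"
    by (rule rapid_decay_mult_null)
  then show "rapid_decay (\<lambda>j. 1 - q j * r j - 1)"
    by simp
qed (rule D_factor_nonzero)

sublocale E_factors: decaying_factors "\<lambda>j. 1 + q j * r (j + 1)"
proof
  have "((\<lambda>j. r (j + 1)) \<longlongrightarrow> 0) at_top" "((\<lambda>j. r (j + 1)) \<longlongrightarrow> 0) at_bot"
    using filterlim_compose[OF r_tendsto_zero(1) filterlim_int_add_const_at_top]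
      filterlim_compose[OF r_tendsto_zero(2) filterlim_int_add_const_at_bot] .
  with rapid_decay_q show "rapid_decay (\<lambda>j. 1 + q j * r (j + 1) - 1)"
    by (simp add: rapid_decay_mult_null)
qed (rule E_factor_nonzero)

lemma Dn_rec: "Dn q r n = Dn q r (n - 1) * (1 - q n * r n)"
  unfolding Dn_eq_left_prod by (rule D_factors.left_prod_rec)

lemma En_rec: "En q r n = En q r (n - 1) * (1 + q n * r (n + 1))"
  unfolding En_eq_left_prod by (rule E_factors.left_prod_rec)

lemma Dn_nonzero: "Dn q r n \<noteq> 0"
  unfolding Dn_eq_left_prod by (rule D_factors.left_prod_nonzero)

lemma En_nonzero: "En q r n \<noteq> 0"
  unfolding En_eq_left_prod by (rule E_factors.left_prod_nonzero)

lemma Dinf_nonzero: "Dinf q r \<noteq> 0"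
  unfolding Dinf_eq_sym_prod by (rule D_factors.sym_prod_nonzero)

lemma Einf_nonzero: "Einf q r \<noteq> 0"
  unfolding Einf_eq_sym_prod by (rule E_factors.sym_prod_nonzero)

lemma Dn_tendsto_Dinf: "(Dn q r \<longlongrightarrow> Dinf q r) at_top"
  unfolding Dn_eq_left_prod Dinf_eq_sym_prod by (rule D_factors.left_prod_tendsto_sym_prod)

lemma Dn_pred_tendsto_Dinf: "((\<lambda>n. Dn q r (n - 1)) \<longlongrightarrow> Dinf q r) at_top"
  using filterlim_compose[OF Dn_tendsto_Dinf filterlim_int_add_const_at_top[of "- 1"]] by simp

lemma En_pred_tendsto_Einf: "((\<lambda>n. En q r (n - 1)) \<longlongrightarrow> Einf q r) at_top"
  using filterlim_compose[OF E_factors.left_prod_tendsto_sym_prod filterlim_int_add_const_at_top[of "- 1"]]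
  unfolding En_eq_left_prod Einf_eq_sym_prod by simp

definition uv_gauge :: "(int \<Rightarrow> complex \<times> complex) \<Rightarrow> int \<Rightarrow> complex \<times> complex" where
  "uv_gauge \<Psi> n = (fst (\<Psi> n) / En q r (n - 1),
                    r n * fst (\<Psi> n) / En q r (n - 1) + snd (\<Psi> n) / Dn q r (n - 1))"

definition ps_gauge :: "(int \<Rightarrow> complex \<times> complex) \<Rightarrow> int \<Rightarrow> complex \<times> complex" where
  "ps_gauge \<Psi> n = (fst (\<Psi> n) / En q r (n - 1) - q n * snd (\<Psi> n) / Dn q r n,
                    snd (\<Psi> n) / Dn q r n)"

lemma solves_U_uv_gauge:
  assumes "solves_U (u_pot q r) (v_pot q r) 1 \<Psi>"
  shows "solves_U q (\<lambda>_. 0) 1 (uv_gauge \<Psi>)"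
  unfolding solves_U_at_1
proof
  fix n
  obtain x y where step: "fst (\<Psi> n) = x + u_pot q r n * y" "snd (\<Psi> n) = v_pot q r n * x + y"
    and succ: "fst (\<Psi> (n + 1)) = x" "snd (\<Psi> (n + 1)) = y"
    using solves_U_at_1D[OF assms, of n] by blast
  obtain D0 E0 where D0: "Dn q r (n - 1) = D0" and E0: "En q r (n - 1) = E0"
    by blast
  define a b where "a = 1 - q n * r n" and "b = 1 + q n * r (n + 1)"
  have D1: "Dn q r n = D0 * a" and E1: "En q r n = E0 * b"
    using Dn_rec[of n] En_rec[of n] by (simp_all add: D0 E0 a_def b_def)
  have nonzero: "D0 \<noteq> 0" "E0 \<noteq> 0" "a \<noteq> 0" "b \<noteq> 0"
    using Dn_nonzero En_nonzero D_factor_nonzero E_factor_nonzero by (auto simp: a_def b_def simp flip: D0 E0)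
  show "fst (uv_gauge \<Psi> n) = fst (uv_gauge \<Psi> (n + 1)) + q n * snd (uv_gauge \<Psi> (n + 1)) \<and>
        snd (uv_gauge \<Psi> n) = 0 * fst (uv_gauge \<Psi> (n + 1)) + snd (uv_gauge \<Psi> (n + 1))"
    unfolding uv_gauge_def fst_conv snd_conv step succ u_pot_def v_pot_def add_diff_cancel_right' D0 E0 D1 E1
    using nonzero by (simp add: field_simps) (simp add: a_def b_def algebra_simps)
qed

lemma solves_U_ps_gauge:
  assumes "solves_U (p_pot q r) (s_pot q r) 1 \<Psi>"
  shows "solves_U (\<lambda>_. 0) (\<lambda>n. r (n + 1)) 1 (ps_gauge \<Psi>)"
  unfolding solves_U_at_1
proof
  fix n
  obtain x y where step: "fst (\<Psi> n) = x + p_pot q r n * y" "snd (\<Psi> n) = s_pot q r n * x + y"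
    and succ: "fst (\<Psi> (n + 1)) = x" "snd (\<Psi> (n + 1)) = y"
    using solves_U_at_1D[OF assms, of n] by blast
  obtain D0 E0 where D0: "Dn q r n = D0" and E0: "En q r (n - 1) = E0"
    by blast
  define a b where "a = 1 - q (n + 1) * r (n + 1)" and "b = 1 + q n * r (n + 1)"
  have D1: "Dn q r (n + 1) = D0 * a" and E1: "En q r n = E0 * b"
    using Dn_rec[of "n + 1"] En_rec[of n] by (simp_all add: D0 E0 a_def b_def)
  have nonzero: "D0 \<noteq> 0" "E0 \<noteq> 0" "a \<noteq> 0" "b \<noteq> 0"
    using Dn_nonzero En_nonzero D_factor_nonzero E_factor_nonzero by (auto simp: a_def b_def simp flip: D0 E0)
  show "fst (ps_gauge \<Psi> n) = fst (ps_gauge \<Psi> (n + 1)) + 0 * snd (ps_gauge \<Psi> (n + 1)) \<and>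
        snd (ps_gauge \<Psi> n) = r (n + 1) * fst (ps_gauge \<Psi> (n + 1)) + snd (ps_gauge \<Psi> (n + 1))"
    unfolding ps_gauge_def fst_conv snd_conv step succ p_pot_def s_pot_def add_diff_cancel_right' D0 E0 D1 E1
    using nonzero by (simp add: field_simps) (simp add: a_def b_def algebra_simps)
qed

lemma uv_gauge_tendsto:
  assumes "((\<lambda>n. fst (\<Psi> n)) \<longlongrightarrow> a) at_top" and "((\<lambda>n. snd (\<Psi> n)) \<longlongrightarrow> b) at_top"
  shows "(uv_gauge \<Psi> \<longlongrightarrow> (a / Einf q r, b / Dinf q r)) at_top"
proof -
  have "((\<lambda>n. (fst (\<Psi> n) / En q r (n - 1),
          r n * fst (\<Psi> n) / En q r (n - 1) + snd (\<Psi> n) / Dn q r (n - 1)))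
        \<longlongrightarrow> (a / Einf q r, 0 * a / Einf q r + b / Dinf q r)) at_top"
    using assms r_tendsto_zero(1) En_pred_tendsto_Einf Dn_pred_tendsto_Dinf Einf_nonzero Dinf_nonzero
    by (intro tendsto_intros) auto
  then show ?thesis
    unfolding uv_gauge_def[abs_def] by simp
qed

lemma ps_gauge_tendsto:
  assumes "((\<lambda>n. fst (\<Psi> n)) \<longlongrightarrow> a) at_top" and "((\<lambda>n. snd (\<Psi> n)) \<longlongrightarrow> b) at_top"
  shows "(ps_gauge \<Psi> \<longlongrightarrow> (a / Einf q r, b / Dinf q r)) at_top"
proof -
  have "((\<lambda>n. (fst (\<Psi> n) / En q r (n - 1) - q n * snd (\<Psi> n) / Dn q r n,
          snd (\<Psi> n) / Dn q r n))
        \<longlongrightarrow> (a / Einf q r - 0 * b / Dinf q r, b / Dinf q r)) at_top"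
    using assms rapid_decay_tendsto_zero(1)[OF rapid_decay_q] En_pred_tendsto_Einf Dn_tendsto_Dinf
      Einf_nonzero Dinf_nonzero
    by (intro tendsto_intros) auto
  then show ?thesis
    unfolding ps_gauge_def[abs_def] by simp
qed

lemma uv_reconstruction:
  assumes psi: "jost_psi (u_pot q r) (v_pot q r) 1 \<psi>"
    and psibar: "jost_psibar (u_pot q r) (v_pot q r) 1 \<psi>b"
  shows "q n = Dinf q r / Einf q r * (fst (\<psi> n) / fst (\<psi>b n) - fst (\<psi> (n + 1)) / fst (\<psi>b (n + 1)))"
    and "r n = - (Einf q r / Dinf q r) *
               (fst (\<psi>b n) * snd (\<psi>b n) / (fst (\<psi>b n) * snd (\<psi> n) - snd (\<psi>b n) * fst (\<psi> n)))"
proof -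
  define \<Phi> \<Phi>b where "\<Phi> = uv_gauge \<psi>" and "\<Phi>b = uv_gauge \<psi>b"
  have sol: "solves_U q (\<lambda>_. 0) 1 \<Phi>" "solves_U q (\<lambda>_. 0) 1 \<Phi>b"
    using psi psibar solves_U_uv_gauge unfolding \<Phi>_def \<Phi>b_def jost_psi_at_1 jost_psibar_at_1 by blast+
  have lim: "(\<Phi> \<longlongrightarrow> (0, 1 / Dinf q r)) at_top" "(\<Phi>b \<longlongrightarrow> (1 / Einf q r, 0)) at_top"
    using uv_gauge_tendsto[of \<psi> 0 1] uv_gauge_tendsto[of \<psi>b 1 0] psi psibar
    unfolding \<Phi>_def \<Phi>b_def jost_psi_at_1 jost_psibar_at_1 by simp_all
  have snd_Phi: "snd (\<Phi> m) = 1 / Dinf q r" for m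
    using solves_U_at_1_snd_eq_limit[OF sol(1) tendsto_snd[OF lim(1)]] by simp
  have snd_Phib: "snd (\<Phi>b m) = 0" for m
    using solves_U_at_1_snd_eq_limit[OF sol(2) tendsto_snd[OF lim(2)]] by simp
  have fst_Phi_step: "fst (\<Phi> m) = fst (\<Phi> (m + 1)) + q m / Dinf q r" for m
    using solves_U_at_1D(1)[OF sol(1), of m] snd_Phi by simp
  have fst_Phib: "fst (\<Phi>b m) = 1 / Einf q r" for m
  proof (rule shift_invariant_eq_limit[where y = "\<lambda>m. fst (\<Phi>b m)"])
    show "fst (\<Phi>b k) = fst (\<Phi>b (k + 1))" for k
      using solves_U_at_1D(1)[OF sol(2), of k] snd_Phib by simp
  qed (use tendsto_fst[OF lim(2)] in simp)
  have psibar_fst: "fst (\<psi>b m) = En q r (m - 1) / Einf q r" for m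
    using fst_Phib[of m] En_nonzero[of "m - 1"] Einf_nonzero
    unfolding \<Phi>b_def uv_gauge_def by (simp add: field_simps)
  have ratio: "fst (\<psi> m) / fst (\<psi>b m) = Einf q r * fst (\<Phi> m)" for m
    unfolding \<Phi>_def uv_gauge_def psibar_fst using En_nonzero[of "m - 1"] Einf_nonzero by simp
  show "q n = Dinf q r / Einf q r * (fst (\<psi> n) / fst (\<psi>b n) - fst (\<psi> (n + 1)) / fst (\<psi>b (n + 1)))"
    unfolding ratio fst_Phi_step[of n] using Einf_nonzero Dinf_nonzero by (simp add: field_simps)
  have psibar_snd: "snd (\<psi>b n) = - r n * Dn q r (n - 1) / Einf q r"
    using snd_Phib[of n] psibar_fst[of n] Dn_nonzero[of "n - 1"] En_nonzero[of "n - 1"] Einf_nonzero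
    unfolding \<Phi>b_def uv_gauge_def by (simp add: field_simps eq_neg_iff_add_eq_0)
  have psi_snd: "snd (\<psi> n) = Dn q r (n - 1) / Dinf q r - r n * fst (\<psi> n) * Dn q r (n - 1) / En q r (n - 1)"
    using snd_Phi[of n] Dn_nonzero[of "n - 1"] En_nonzero[of "n - 1"] Dinf_nonzero
    unfolding \<Phi>_def uv_gauge_def by (simp add: field_simps)
  show "r n = - (Einf q r / Dinf q r) *
               (fst (\<psi>b n) * snd (\<psi>b n) / (fst (\<psi>b n) * snd (\<psi> n) - snd (\<psi>b n) * fst (\<psi> n)))"
    unfolding psibar_fst psibar_snd psi_snd
    using Dn_nonzero[of "n - 1"] En_nonzero[of "n - 1"] Einf_nonzero Dinf_nonzero
    by (simp add: field_simps)
qed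

lemma ps_reconstruction:
  assumes psi: "jost_psi (p_pot q r) (s_pot q r) 1 \<psi>"
    and psibar: "jost_psibar (p_pot q r) (s_pot q r) 1 \<psi>b"
  shows "q n = Dinf q r / Einf q r *
               (fst (\<psi> n) * snd (\<psi> n) / (fst (\<psi>b n) * snd (\<psi> n) - snd (\<psi>b n) * fst (\<psi> n)))"
    and "r n = Einf q r / Dinf q r * (snd (\<psi>b (n - 1)) / snd (\<psi> (n - 1)) - snd (\<psi>b n) / snd (\<psi> n))"
proof -
  define \<Phi> \<Phi>b where "\<Phi> = ps_gauge \<psi>" and "\<Phi>b = ps_gauge \<psi>b"
  have sol: "solves_U (\<lambda>_. 0) (\<lambda>n. r (n + 1)) 1 \<Phi>" "solves_U (\<lambda>_. 0) (\<lambda>n. r (n + 1)) 1 \<Phi>b"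
    using psi psibar solves_U_ps_gauge unfolding \<Phi>_def \<Phi>b_def jost_psi_at_1 jost_psibar_at_1 by blast+
  have lim: "(\<Phi> \<longlongrightarrow> (0, 1 / Dinf q r)) at_top" "(\<Phi>b \<longlongrightarrow> (1 / Einf q r, 0)) at_top"
    using ps_gauge_tendsto[of \<psi> 0 1] ps_gauge_tendsto[of \<psi>b 1 0] psi psibar
    unfolding \<Phi>_def \<Phi>b_def jost_psi_at_1 jost_psibar_at_1 by simp_all
  have fst_Phi: "fst (\<Phi> m) = 0" for m
    using solves_U_at_1_fst_eq_limit[OF sol(1) tendsto_fst[OF lim(1)]] by simp
  have fst_Phib: "fst (\<Phi>b m) = 1 / Einf q r" for m
    using solves_U_at_1_fst_eq_limit[OF sol(2) tendsto_fst[OF lim(2)]] by simp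
  have snd_Phi: "snd (\<Phi> m) = 1 / Dinf q r" for m
  proof (rule shift_invariant_eq_limit[where y = "\<lambda>m. snd (\<Phi> m)"])
    show "snd (\<Phi> k) = snd (\<Phi> (k + 1))" for k
      using solves_U_at_1D(2)[OF sol(1), of k] fst_Phi by simp
  qed (use tendsto_snd[OF lim(1)] in simp)
  have snd_Phib_step: "snd (\<Phi>b (m - 1)) = r m / Einf q r + snd (\<Phi>b m)" for m
    using solves_U_at_1D(2)[OF sol(2), of "m - 1"] fst_Phib by simp
  have psi_snd: "snd (\<psi> m) = Dn q r m / Dinf q r" for m
    using snd_Phi[of m] Dn_nonzero[of m] Dinf_nonzero
    unfolding \<Phi>_def ps_gauge_def by (simp add: field_simps)
  have ratio: "snd (\<psi>b m) / snd (\<psi> m) = Dinf q r * snd (\<Phi>b m)" for m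
    unfolding \<Phi>b_def ps_gauge_def psi_snd using Dn_nonzero[of m] Dinf_nonzero by simp
  show "r n = Einf q r / Dinf q r * (snd (\<psi>b (n - 1)) / snd (\<psi> (n - 1)) - snd (\<psi>b n) / snd (\<psi> n))"
    unfolding ratio snd_Phib_step[of n] using Einf_nonzero Dinf_nonzero by (simp add: field_simps)
  have psi_fst: "fst (\<psi> n) = q n * En q r (n - 1) / Dinf q r"
    using fst_Phi[of n] psi_snd[of n] Dn_nonzero[of n] En_nonzero[of "n - 1"] Dinf_nonzero
    unfolding \<Phi>_def ps_gauge_def by (simp add: field_simps)
  have psibar_fst: "fst (\<psi>b n) = En q r (n - 1) / Einf q r + q n * snd (\<psi>b n) * En q r (n - 1) / Dn q r n"
    using fst_Phib[of n] Dn_nonzero[of n] En_nonzero[of "n - 1"] Einf_nonzero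
    unfolding \<Phi>b_def ps_gauge_def by (simp add: field_simps)
  show "q n = Dinf q r / Einf q r *
               (fst (\<psi> n) * snd (\<psi> n) / (fst (\<psi>b n) * snd (\<psi> n) - snd (\<psi>b n) * fst (\<psi> n)))"
    unfolding psi_fst psibar_fst psi_snd
    using Dn_nonzero[of n] En_nonzero[of "n - 1"] Einf_nonzero Dinf_nonzero
    by (simp add: field_simps)
qed

end

theorem theorem3p8:
  fixes q r :: "int \<Rightarrow> complex"
    and \<psi>uv \<psi>buv \<psi>ps \<psi>bps :: "int \<Rightarrow> complex \<times> complex"
  assumes "rapid_decay q" and "rapid_decay r"
    and "\<And>n. 1 - q n * r n \<noteq> 0"
    and "\<And>n. 1 + q n * r (n + 1) \<noteq> 0"
    and "jost_psi (u_pot q r) (v_pot q r) 1 \<psi>uv"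
    and "jost_psibar (u_pot q r) (v_pot q r) 1 \<psi>buv"
    and "jost_psi (p_pot q r) (s_pot q r) 1 \<psi>ps"
    and "jost_psibar (p_pot q r) (s_pot q r) 1 \<psi>bps"
  shows "\<forall>n.
     q n = Dinf q r / Einf q r *
        (fst (\<psi>uv n) / fst (\<psi>buv n) - fst (\<psi>uv (n + 1)) / fst (\<psi>buv (n + 1))) \<and>
     r n = - (Einf q r / Dinf q r) *
        (fst (\<psi>buv n) * snd (\<psi>buv n) /
         (fst (\<psi>buv n) * snd (\<psi>uv n) - snd (\<psi>buv n) * fst (\<psi>uv n))) \<and>
     q n = Dinf q r / Einf q r *
        (fst (\<psi>ps n) * snd (\<psi>ps n) /
         (fst (\<psi>bps n) * snd (\<psi>ps n) - snd (\<psi>bps n) * fst (\<psi>ps n))) \<and>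
     r n = Einf q r / Dinf q r *
        (snd (\<psi>bps (n - 1)) / snd (\<psi>ps (n - 1)) - snd (\<psi>bps n) / snd (\<psi>ps n))"
proof -
  interpret rapidly_decaying_potentials q r
    by (rule rapidly_decaying_potentials.intro) (use assms in auto)
  show ?thesis
    using uv_reconstruction[OF assms(5,6)] ps_reconstruction[OF assms(7,8)] by blast
qed

end
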